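(* Let $(a_n)_{n\in\mathbb{N}}$ be a C-finite sequence over $\mathbb{C}$. Let $c\in\mathbb{N}^{+}$ and $d,e\in\mathbb{Z}$. Then the sequence $b_n=a_{c\binom{n}{2}+dn+e}$ (defined for all $n$ large enough that the index is nonnegative) is C$^2$-finite over $\mathbb{C}$. In particular, $(a_{n^2})_n$ and $(a_{\binom{n}{2}})_n$ are C$^2$-finite.
   Context: Let $\mathbb{K}$ be a field. A sequence $(a_n)_{n\in\mathbb{N}}$ over $\mathbb{K}$ is C-finite if there exist $s\in\mathbb{N}$ and constants $c^{(0)},\dots,c^{(s-1)}\in\mathbb{K}$ such that $a_{n+s}=c^{(s-1)}a_{n+s-1}+\dots+c^{(0)}a_n$ for every $n\ge s$. A sequence $(a_n)$ over $\mathbb{K}$ is C$^2$-finite if there exist $s\in\mathbb{N}$ and C-finite sequences $(c^{(0)}_n),\dots,(c^{(s)}_n)$ over $\mathbb{K}$ with $c^{(s)}_n\neq 0$ for every $n$, such that $c^{(s)}_n a_{n+s}=c^{(s-1)}_n a_{n+s-1}+\dots+c^{(0)}_n a_n$ for every $n\ge s$. *)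

theory Defs
  imports Complex_Main
begin

text \<open>C-finite sequences, following the paper's definition literally
  (the recurrence is required for every n \<ge> s).\<close>
definition C_finite :: "(nat \<Rightarrow> 'a::field) \<Rightarrow> bool" where
  "C_finite a \<longleftrightarrow>
     (\<exists>(s::nat) (c::nat \<Rightarrow> 'a).
        \<forall>n\<ge>s. a (n + s) = (\<Sum>i<s. c i * a (n + i)))"

definition C2_finite :: "(nat \<Rightarrow> 'a::field) \<Rightarrow> bool" where
  "C2_finite a \<longleftrightarrow>
     (\<exists>(s::nat) (c::nat \<Rightarrow> nat \<Rightarrow> 'a).
        (\<forall>i\<le>s. C_finite (c i)) \<and> (\<forall>n. c s n \<noteq> 0) \<and>
        (\<forall>n\<ge>s. c s n * a (n + s) = (\<Sum>i<s. c i n * a (n + i))))"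

end

theory Submission
  imports
    Defs
    "HOL-Computational_Algebra.Fundamental_Theorem_Algebra"
    "HOL-Computational_Algebra.Polynomial_Factorial"
    "HOL-Computational_Algebra.Field_as_Ring"
begin

text \<open>A C-finite sequence over the complex numbers is eventually an exponential polynomial,
  a sum of terms \<open>\<lambda>^m Q(m)\<close> with polynomials \<open>Q\<close>. After shifting \<open>n\<close> so that the index is
  large, the substitution \<open>m = c C(n,2) + d n + e\<close> turns it into a sum of terms
  \<open>\<mu>^C(n,2) R(n)\<close> with \<open>\<mu> = \<lambda>^c\<close> and \<open>R\<close> C-finite. If \<open>p(E)\<close> annihilates \<open>R\<close>, the operator
  \<open>\<Sum>\<^sub>j p\<^sub>j \<Lambda>^(C(n+K,2) - C(n+j,2)) E^j\<close> (with \<open>K = deg p\<close>) kills \<open>\<Lambda>^C(n,2) R(n)\<close> and maps every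
  other term \<open>M^C(n,2) R'(n)\<close> to a term of the same shape; its coefficients are geometric in
  \<open>n\<close>. Removing the terms one at a time and composing these monic operators yields a monic
  recurrence for the subsequence whose coefficients are sums of geometric sequences, hence
  C-finite.\<close>

section \<open>Polynomials in the shift operator\<close>

text \<open>\<open>shift_op p a\<close> is \<open>p(E) a\<close>, where \<open>E\<close> is the shift \<open>(E a) m = a (m + 1)\<close>.\<close>

definition shift_op :: "'a::comm_ring_1 poly \<Rightarrow> (nat \<Rightarrow> 'a) \<Rightarrow> nat \<Rightarrow> 'a" where
  "shift_op p a m = (\<Sum>j\<le>degree p. coeff p j * a (m + j))"

lemma shift_op_eq_sum_lessThan:
  assumes "degree p < N"
  shows "shift_op p a m = (\<Sum>j<N. coeff p j * a (m + j))"
proof -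
  have "(\<Sum>j<N. coeff p j * a (m + j)) = (\<Sum>j\<le>degree p. coeff p j * a (m + j))"
    by (rule sum.mono_neutral_right) (use assms in \<open>auto simp: coeff_eq_0\<close>)
  then show ?thesis by (simp add: shift_op_def)
qed

lemma shift_op_monic:
  assumes "lead_coeff p = 1"
  shows "shift_op p a m = a (m + degree p) + (\<Sum>j<degree p. coeff p j * a (m + j))"
  using assms by (simp add: shift_op_def lessThan_Suc_atMost[symmetric])

lemma shift_op_1 [simp]: "shift_op 1 a m = a m"
  by (simp add: shift_op_def)

lemma shift_op_add: "shift_op (p + q) a m = shift_op p a m + shift_op q a m"
proof -
  define N where "N = Suc (max (degree p) (degree q))"
  have "degree (p + q) < N" "degree p < N" "degree q < N"
    using degree_add_le_max[of p q] unfolding N_def by linarith+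
  then show ?thesis by (simp only: shift_op_eq_sum_lessThan coeff_add sum.distrib distrib_right)
qed

lemma shift_op_smult: "shift_op (smult c p) a m = c * shift_op p a m"
proof -
  have "degree (smult c p) < Suc (degree p)" "degree p < Suc (degree p)"
    using degree_smult_le[of c p] by simp_all
  then show ?thesis
    by (simp only: shift_op_eq_sum_lessThan coeff_smult sum_distrib_left mult.assoc)
qed

lemma shift_op_pCons: "shift_op (pCons c p) a m = c * a m + shift_op p (\<lambda>k. a (k + 1)) m"
proof -
  have "degree (pCons c p) < Suc (Suc (degree p))"
    by (simp add: degree_pCons_le le_imp_less_Suc)
  then have "shift_op (pCons c p) a m = (\<Sum>j<Suc (Suc (degree p)). coeff (pCons c p) j * a (m + j))"
    by (rule shift_op_eq_sum_lessThan)
  also have "\<dots> = c * a m + (\<Sum>j<Suc (degree p). coeff p j * a (m + Suc j))"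
    by (subst sum.lessThan_Suc_shift) simp
  also have "\<dots> = c * a m + shift_op p (\<lambda>k. a (k + 1)) m"
    by (simp add: shift_op_eq_sum_lessThan[of p "Suc (degree p)"])
  finally show ?thesis .
qed

lemma shift_op_seq_shift: "shift_op p (\<lambda>k. a (k + t)) m = shift_op p a (m + t)"
  by (simp add: shift_op_def algebra_simps)

lemma shift_op_mult: "shift_op (p * q) a m = shift_op p (shift_op q a) m"
proof (induction p arbitrary: a m)
  case 0
  then show ?case by (simp add: shift_op_def)
next
  case (pCons c p)
  have "shift_op (pCons c p * q) a m = c * shift_op q a m + shift_op (p * q) (\<lambda>k. a (k + 1)) m"
    by (simp add: shift_op_add shift_op_smult shift_op_pCons)
  also have "\<dots> = c * shift_op q a m + shift_op p (shift_op q (\<lambda>k. a (k + 1))) m"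
    by (simp only: pCons.IH)
  also have "shift_op q (\<lambda>k. a (k + 1)) = (\<lambda>k. shift_op q a (k + 1))"
    using shift_op_seq_shift[of q a 1] by (auto simp: fun_eq_iff)
  finally show ?case by (simp add: shift_op_pCons)
qed

lemma shift_op_power_Suc: "shift_op (p ^ Suc k) a m = shift_op (p ^ k) (shift_op p a) m"
  by (subst power_Suc2) (rule shift_op_mult)

lemma shift_op_lincomb:
  "shift_op p (\<lambda>k. u * a k + v * b k) m = u * shift_op p a m + v * shift_op p b m"
  by (simp add: shift_op_def sum_distrib_left sum.distrib algebra_simps)

lemma shift_op_cmult: "shift_op p (\<lambda>k. u * a k) m = u * shift_op p a m"
  using shift_op_lincomb[of p u a 0 a m] by simp

lemma shift_op_zero_seq [simp]: "shift_op p (\<lambda>k. 0) m = 0"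
  by (simp add: shift_op_def)

lemma shift_op_geometric: "shift_op p (\<lambda>n. r ^ n) m = r ^ m * poly p r"
  by (simp add: shift_op_def poly_altdef sum_distrib_left power_add algebra_simps)

lemma shift_op_X_power: "shift_op ([:0, 1:] ^ k) a m = a (m + k)"
proof (induction k arbitrary: a m)
  case (Suc k)
  have "shift_op [:0, 1:] a = (\<lambda>m. a (m + 1))"
    by (simp add: shift_op_def fun_eq_iff)
  with Suc show ?case by (simp only: shift_op_power_Suc) simp
qed simp

lemma shift_op_scale_power:
  "shift_op ([:- l, 1:] ^ k) (\<lambda>m. l ^ m * h m) m = l ^ (m + k) * shift_op ([:- 1, 1:] ^ k) h m"
proof (induction k arbitrary: h m)
  case (Suc k)
  have "shift_op [:- l, 1:] (\<lambda>m. l ^ m * h m) = (\<lambda>m. l * (l ^ m * shift_op [:- 1, 1:] h m))"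
    by (simp add: shift_op_def fun_eq_iff algebra_simps)
  then show ?case
    by (simp only: shift_op_power_Suc shift_op_cmult Suc.IH) (simp add: power_add)
qed simp

section \<open>Sums of geometric sequences\<close>

definition geom_comb :: "(nat \<Rightarrow> 'a::comm_ring_1) \<Rightarrow> bool" where
  "geom_comb f \<longleftrightarrow> (\<exists>L. \<forall>n. f n = (\<Sum>x\<leftarrow>L. fst x * snd x ^ n))"

lemma geom_comb_sum_list: "geom_comb (\<lambda>n. \<Sum>x\<leftarrow>L. u x * v x ^ n)"
  unfolding geom_comb_def by (rule exI[of _ "map (\<lambda>x. (u x, v x)) L"]) (simp add: o_def)

lemma geom_comb_geometric: "geom_comb (\<lambda>n. b * r ^ n)"
  using geom_comb_sum_list[of "\<lambda>_. b" "\<lambda>_. r" "[()]"] by simp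

lemma geom_comb_const: "geom_comb (\<lambda>n. b)"
  using geom_comb_geometric[of b 1] by simp

lemma geom_comb_add:
  assumes "geom_comb f" "geom_comb g"
  shows "geom_comb (\<lambda>n. f n + g n)"
proof -
  obtain L1 L2 where "\<forall>n. f n = (\<Sum>x\<leftarrow>L1. fst x * snd x ^ n)" "\<forall>n. g n = (\<Sum>x\<leftarrow>L2. fst x * snd x ^ n)"
    using assms unfolding geom_comb_def by blast
  then show ?thesis unfolding geom_comb_def by (intro exI[of _ "L1 @ L2"]) simp
qed

lemma geom_comb_mult_geometric:
  assumes "geom_comb f"
  shows "geom_comb (\<lambda>n. b * r ^ n * f n)"
proof -
  obtain L where "\<forall>n. f n = (\<Sum>x\<leftarrow>L. fst x * snd x ^ n)"
    using assms unfolding geom_comb_def by blast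
  then have "b * r ^ n * f n = (\<Sum>x\<leftarrow>L. (b * fst x) * (r * snd x) ^ n)" for n
    by (simp add: power_mult_distrib algebra_simps flip: sum_list_const_mult)
  with geom_comb_sum_list show ?thesis by simp
qed

lemma geom_comb_uminus: "geom_comb f \<Longrightarrow> geom_comb (\<lambda>n. - f n)"
  using geom_comb_mult_geometric[of f "- 1" 1] by simp

lemma geom_comb_diff: "geom_comb f \<Longrightarrow> geom_comb g \<Longrightarrow> geom_comb (\<lambda>n. f n - g n)"
  using geom_comb_add[of f "\<lambda>n. - g n"] geom_comb_uminus[of g] by simp

lemma geom_comb_mult:
  assumes "geom_comb f" "geom_comb g"
  shows "geom_comb (\<lambda>n. f n * g n)"
proof -
  obtain L where L: "\<forall>n. f n = (\<Sum>x\<leftarrow>L. fst x * snd x ^ n)"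
    using assms(1) unfolding geom_comb_def by blast
  have "geom_comb (\<lambda>n. \<Sum>x\<leftarrow>L. fst x * snd x ^ n * g n)"
  proof (induction L)
    case Nil
    show ?case using geom_comb_const[of 0] by simp
  next
    case (Cons x L)
    then show ?case using geom_comb_add[OF geom_comb_mult_geometric[OF assms(2)]] by simp
  qed
  moreover have "(\<lambda>n. f n * g n) = (\<lambda>n. \<Sum>x\<leftarrow>L. fst x * snd x ^ n * g n)"
    by (simp add: L sum_list_mult_const[symmetric])
  ultimately show ?thesis by simp
qed

lemma geom_comb_shift:
  assumes "geom_comb f"
  shows "geom_comb (\<lambda>n. f (n + k))"
proof -
  obtain L where "\<forall>n. f n = (\<Sum>x\<leftarrow>L. fst x * snd x ^ n)"
    using assms unfolding geom_comb_def by blast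
  then have "f (n + k) = (\<Sum>x\<leftarrow>L. (fst x * snd x ^ k) * snd x ^ n)" for n
    by (simp add: power_add algebra_simps)
  with geom_comb_sum_list show ?thesis by simp
qed

lemma geom_comb_sum: "(\<And>i. i \<in> A \<Longrightarrow> geom_comb (f i)) \<Longrightarrow> geom_comb (\<lambda>n. \<Sum>i\<in>A. f i n)"
proof (induction A rule: infinite_finite_induct)
  case (insert x F)
  then show ?case using geom_comb_add[of "f x" "\<lambda>n. \<Sum>i\<in>F. f i n"] by simp
qed (use geom_comb_const[of 0] in auto)

lemma geom_comb_if: "(P \<Longrightarrow> geom_comb f) \<Longrightarrow> geom_comb (\<lambda>n. if P then f n else 0)"
  using geom_comb_const[of 0] by (cases P) auto

section \<open>Sequences annihilated by a monic shift polynomial\<close>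

text \<open>These are the C-finite sequences whose recurrence holds from the start.\<close>

definition shift_annihilated :: "(nat \<Rightarrow> 'a::comm_ring_1) \<Rightarrow> bool" where
  "shift_annihilated a \<longleftrightarrow> (\<exists>p. lead_coeff p = 1 \<and> (\<forall>m. shift_op p a m = 0))"

lemma shift_annihilated_zero: "shift_annihilated (\<lambda>k. 0)"
  unfolding shift_annihilated_def by (intro exI[of _ 1]) simp

lemma shift_annihilated_add:
  fixes a b :: "nat \<Rightarrow> 'a::idom"
  assumes "shift_annihilated a" "shift_annihilated b"
  shows "shift_annihilated (\<lambda>k. a k + b k)"
proof -
  obtain p q where p: "lead_coeff p = 1" "shift_op p a = (\<lambda>k. 0)"
    and q: "lead_coeff q = 1" "shift_op q b = (\<lambda>k. 0)"
    using assms unfolding shift_annihilated_def by fastforce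
  have "shift_op (p * q) a m = 0" for m
    using p by (simp add: mult.commute[of p] shift_op_mult)
  moreover have "shift_op (p * q) b m = 0" for m
    using q by (simp add: shift_op_mult)
  ultimately have "shift_op (p * q) (\<lambda>k. 1 * a k + 1 * b k) m = 0" for m
    unfolding shift_op_lincomb by simp
  moreover have "lead_coeff (p * q) = 1" by (simp add: lead_coeff_mult p q)
  ultimately show ?thesis unfolding shift_annihilated_def by auto
qed

lemma shift_annihilated_cmult: "shift_annihilated a \<Longrightarrow> shift_annihilated (\<lambda>k. u * a k)"
  unfolding shift_annihilated_def by (auto simp: shift_op_cmult)

lemma shift_annihilated_shift: "shift_annihilated a \<Longrightarrow> shift_annihilated (\<lambda>k. a (k + t))"
  unfolding shift_annihilated_def by (auto simp: shift_op_seq_shift)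

lemma shift_annihilated_sum:
  fixes f :: "'b \<Rightarrow> nat \<Rightarrow> 'a::idom"
  shows "(\<And>i. i \<in> A \<Longrightarrow> shift_annihilated (f i)) \<Longrightarrow> shift_annihilated (\<lambda>n. \<Sum>i\<in>A. f i n)"
proof (induction A rule: infinite_finite_induct)
  case (insert x F)
  then show ?case using shift_annihilated_add[of "f x" "\<lambda>n. \<Sum>i\<in>F. f i n"] by simp
qed (use shift_annihilated_zero in auto)

lemma shift_annihilated_geometric: "shift_annihilated (\<lambda>n. r ^ n)"
  unfolding shift_annihilated_def
  by (intro exI[of _ "[:- r, 1:]"]) (simp add: shift_op_geometric)

lemma shift_annihilated_mult_geometric:
  assumes "shift_annihilated R"
  shows "shift_annihilated (\<lambda>k. r ^ k * R k)"
proof -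
  obtain p where p: "lead_coeff p = 1" "\<And>m. shift_op p R m = 0"
    using assms unfolding shift_annihilated_def by blast
  define K where "K = degree p"
  text \<open>The polynomial \<open>r\<^sup>K p(x/r)\<close>, which makes sense also for \<open>r = 0\<close>.\<close>
  define p' where "p' = Poly (map (\<lambda>j. coeff p j * r ^ (K - j)) [0..<Suc K])"
  have coeff_p': "coeff p' j = (if j \<le> K then coeff p j * r ^ (K - j) else 0)" for j
    unfolding p'_def by (auto simp: nth_default_def simp del: upt_Suc)
  have "coeff p' K = 1" using p by (simp add: coeff_p' K_def)
  moreover have "degree p' \<le> K" by (rule degree_le) (auto simp: coeff_p')
  ultimately have deg_p': "degree p' = K" by (metis le_degree one_neq_zero order_antisym)
  have "shift_op p' (\<lambda>k. r ^ k * R k) m = (\<Sum>j\<le>K. r ^ (m + K) * (coeff p j * R (m + j)))" for m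
    unfolding shift_op_def deg_p'
  proof (rule sum.cong)
    fix j assume "j \<in> {..K}"
    then have "r ^ (K - j) * r ^ (m + j) = r ^ (m + K)" by (simp add: add.commute flip: power_add)
    then show "coeff p' j * (r ^ (m + j) * R (m + j)) = r ^ (m + K) * (coeff p j * R (m + j))"
      using \<open>j \<in> {..K}\<close> by (simp add: coeff_p' algebra_simps)
  qed simp
  then have "shift_op p' (\<lambda>k. r ^ k * R k) m = 0" for m
    using p(2) by (simp add: shift_op_def K_def flip: sum_distrib_left)
  with \<open>coeff p' K = 1\<close> deg_p' show ?thesis unfolding shift_annihilated_def by auto
qed

lemma shift_annihilated_geom_comb:
  fixes f :: "nat \<Rightarrow> 'a::idom"
  assumes "geom_comb f"
  shows "shift_annihilated f"
proof -
  obtain L where L: "\<forall>n. f n = (\<Sum>x\<leftarrow>L. fst x * snd x ^ n)"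
    using assms unfolding geom_comb_def by blast
  have "shift_annihilated (\<lambda>n. \<Sum>x\<leftarrow>L. fst x * snd x ^ n)"
  proof (induction L)
    case (Cons x L)
    from shift_annihilated_add[OF shift_annihilated_cmult[OF shift_annihilated_geometric] this]
    show ?case by simp
  qed (simp add: shift_annihilated_zero)
  moreover have "f = (\<lambda>n. \<Sum>x\<leftarrow>L. fst x * snd x ^ n)" using L by auto
  ultimately show ?thesis by simp
qed

lemma C_finite_if_shift_annihilated:
  assumes "shift_annihilated a"
  shows "C_finite a"
proof -
  obtain p where p: "lead_coeff p = 1" "\<And>m. shift_op p a m = 0"
    using assms unfolding shift_annihilated_def by blast
  have "a (n + degree p) = (\<Sum>i<degree p. - coeff p i * a (n + i))" for n
    using p shift_op_monic[of p a n] by (simp add: sum_negf eq_neg_iff_add_eq_0)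
  then show ?thesis
    unfolding C_finite_def by (intro exI[of _ "degree p"] exI[of _ "\<lambda>i. - coeff p i"]) auto
qed

lemma C_finite_if_geom_comb: "geom_comb f \<Longrightarrow> C_finite f"
  by (simp add: C_finite_if_shift_annihilated shift_annihilated_geom_comb)

text \<open>The recurrence in \<open>C_finite\<close> is only required for \<open>n \<ge> s\<close>, i.e. from index \<open>2 s\<close> on;
  shifting by \<open>s\<close> makes it hold everywhere.\<close>

lemma shift_annihilated_if_C_finite:
  assumes "C_finite a"
  shows "\<exists>s. shift_annihilated (\<lambda>m. a (m + s))"
proof -
  obtain s c where rec: "\<forall>n\<ge>s. a (n + s) = (\<Sum>i<s. c i * a (n + i))"
    using assms unfolding C_finite_def by blast
  define p where "p = monom 1 s - (\<Sum>i<s. monom (c i) i)"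
  have coeff_p: "coeff p j = (if j = s then 1 else 0) - (if j < s then c j else 0)" for j
    by (simp add: p_def coeff_sum coeff_monom sum.delta' if_distrib[of "\<lambda>x. x = _"]
        cong: if_cong)
  have "degree p \<le> s"
    unfolding p_def by (intro degree_diff_le degree_sum_le) (auto intro: degree_monom_le order.trans)
  then have "degree p = s" and "lead_coeff p = 1"
    using coeff_p[of s] le_degree[of p s] by auto
  moreover have "shift_op p (\<lambda>m. a (m + s)) m = 0" for m
    using shift_op_monic[OF \<open>lead_coeff p = 1\<close>, of "\<lambda>m. a (m + s)" m] rec[rule_format, of "m + s"]
    by (simp add: \<open>degree p = s\<close> coeff_p sum_negf algebra_simps)
  ultimately show ?thesis unfolding shift_annihilated_def by blast
qed

section \<open>Recurrences with geometric coefficients\<close>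

text \<open>Coefficients are sums of geometric sequences rather than arbitrary C-finite
  sequences because the former are closed under products, which composing operators
  requires.\<close>

definition geom_span :: "(nat \<Rightarrow> 'a::comm_ring_1) \<Rightarrow> nat \<Rightarrow> (nat \<Rightarrow> 'a) \<Rightarrow> bool" where
  "geom_span y N f \<longleftrightarrow>
     (\<exists>\<gamma>. (\<forall>t<N. geom_comb (\<gamma> t)) \<and> (\<forall>n. f n = (\<Sum>t<N. \<gamma> t n * y (n + t))))"

definition geom_rec :: "(nat \<Rightarrow> 'a::comm_ring_1) \<Rightarrow> bool" where
  "geom_rec y \<longleftrightarrow> (\<exists>N. geom_span y N (\<lambda>n. y (n + N)))"

lemma sum_lessThan_offset:
  fixes g :: "nat \<Rightarrow> 'a::comm_semiring_0"
  shows "(\<Sum>j<K. f j * g (m + j)) = (\<Sum>t<m + K. (if m \<le> t then f (t - m) else 0) * g t)"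
proof -
  have "(\<Sum>t<m + K. (if m \<le> t then f (t - m) else 0) * g t) = (\<Sum>t\<in>{m..<m + K}. f (t - m) * g t)"
    by (subst sum.mono_neutral_right[of "{..<m + K}" "{m..<m + K}"]) (auto intro: sum.cong)
  also have "\<dots> = (\<Sum>j<K. f j * g (m + j))"
    using sum.shift_bounds_nat_ivl[of "\<lambda>t. f (t - m) * g t" 0 m K]
    by (simp add: atLeast0LessThan add.commute)
  finally show ?thesis by simp
qed

lemma sum_convolution_lessThan:
  fixes g :: "nat \<Rightarrow> 'a::comm_semiring_0"
  shows "(\<Sum>i<m. \<Sum>j<K. X i j * g (i + j)) =
    (\<Sum>t<m + K. (\<Sum>i<m. \<Sum>j<K. if i + j = t then X i j else 0) * g t)"
proof -
  have "(\<Sum>t<m + K. (\<Sum>i<m. \<Sum>j<K. if i + j = t then X i j else 0) * g t)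
      = (\<Sum>t<m + K. \<Sum>i<m. \<Sum>j<K. if i + j = t then X i j * g t else 0)"
    by (auto simp: sum_distrib_right intro!: sum.cong)
  also have "\<dots> = (\<Sum>i<m. \<Sum>j<K. \<Sum>t<m + K. if i + j = t then X i j * g t else 0)"
    by (subst sum.swap, rule sum.cong, simp, rule sum.swap)
  also have "\<dots> = (\<Sum>i<m. \<Sum>j<K. X i j * g (i + j))"
    by (intro sum.cong refl) (auto simp: sum.delta')
  finally show ?thesis by simp
qed

lemma geom_span_add:
  assumes "geom_span y N f" "geom_span y N g"
  shows "geom_span y N (\<lambda>n. f n + g n)"
proof -
  obtain \<gamma> \<delta> where "\<forall>t<N. geom_comb (\<gamma> t)" "\<forall>n. f n = (\<Sum>t<N. \<gamma> t n * y (n + t))"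
    "\<forall>t<N. geom_comb (\<delta> t)" "\<forall>n. g n = (\<Sum>t<N. \<delta> t n * y (n + t))"
    using assms unfolding geom_span_def by blast
  then show ?thesis unfolding geom_span_def
    by (intro exI[of _ "\<lambda>t n. \<gamma> t n + \<delta> t n"])
       (auto intro: geom_comb_add simp: sum.distrib distrib_right)
qed

lemma geom_span_diff:
  assumes "geom_span y N f" "geom_span y N g"
  shows "geom_span y N (\<lambda>n. f n - g n)"
proof -
  obtain \<gamma> \<delta> where "\<forall>t<N. geom_comb (\<gamma> t)" "\<forall>n. f n = (\<Sum>t<N. \<gamma> t n * y (n + t))"
    "\<forall>t<N. geom_comb (\<delta> t)" "\<forall>n. g n = (\<Sum>t<N. \<delta> t n * y (n + t))"
    using assms unfolding geom_span_def by blast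
  then show ?thesis unfolding geom_span_def
    by (intro exI[of _ "\<lambda>t n. \<gamma> t n - \<delta> t n"])
       (auto intro: geom_comb_diff simp: sum_subtractf left_diff_distrib)
qed

lemma geom_span_offset:
  assumes "\<And>j. j < K \<Longrightarrow> geom_comb (f j)"
  shows "geom_span y (m + K) (\<lambda>n. \<Sum>j<K. f j n * y (n + m + j))"
  unfolding geom_span_def
proof (intro exI conjI allI impI)
  show "geom_comb (\<lambda>n. if m \<le> t then f (t - m) n else 0)" if "t < m + K" for t
    using that assms by (intro geom_comb_if) auto
  show "(\<Sum>j<K. f j n * y (n + m + j)) = (\<Sum>t<m + K. (if m \<le> t then f (t - m) n else 0) * y (n + t))"
    for n
    using sum_lessThan_offset[of "\<lambda>j. f j n" "\<lambda>t. y (n + t)" m K] by (simp add: add.assoc)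
qed

lemma geom_span_convolution:
  assumes "\<And>i. i < m \<Longrightarrow> geom_comb (\<delta> i)" "\<And>j. j < K \<Longrightarrow> geom_comb (\<gamma> j)"
  shows "geom_span y (m + K) (\<lambda>n. \<Sum>i<m. \<Sum>j<K. \<delta> i n * \<gamma> j (n + i) * y (n + i + j))"
  unfolding geom_span_def
proof (intro exI conjI allI impI)
  show "geom_comb (\<lambda>n. \<Sum>i<m. \<Sum>j<K. if i + j = t then \<delta> i n * \<gamma> j (n + i) else 0)" for t
    using assms by (intro geom_comb_sum geom_comb_if geom_comb_mult geom_comb_shift) auto
  show "(\<Sum>i<m. \<Sum>j<K. \<delta> i n * \<gamma> j (n + i) * y (n + i + j)) =
    (\<Sum>t<m + K. (\<Sum>i<m. \<Sum>j<K. if i + j = t then \<delta> i n * \<gamma> j (n + i) else 0) * y (n + t))" for n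
    using sum_convolution_lessThan[of "\<lambda>i j. \<delta> i n * \<gamma> j (n + i)" "\<lambda>t. y (n + t)" K m]
    by (simp add: add.assoc)
qed

lemma geom_rec_if_monic_image:
  assumes \<gamma>: "\<And>j. j < K \<Longrightarrow> geom_comb (\<gamma> j)" and "geom_rec z"
    and z: "\<And>n. z n = y (n + K) + (\<Sum>j<K. \<gamma> j n * y (n + j))"
  shows "geom_rec y"
proof -
  obtain m \<delta> where \<delta>: "\<forall>i<m. geom_comb (\<delta> i)" and rec_z: "\<And>n. z (n + m) = (\<Sum>i<m. \<delta> i n * z (n + i))"
    using \<open>geom_rec z\<close> unfolding geom_rec_def geom_span_def by blast
  have "y (n + (m + K)) = (\<Sum>i<m. \<delta> i n * y (n + K + i))
      + (\<Sum>i<m. \<Sum>j<K. \<delta> i n * \<gamma> j (n + i) * y (n + i + j))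
      - (\<Sum>j<K. \<gamma> j (n + m) * y (n + m + j))" for n
    using z[of "n + m"] rec_z[of n]
    by (simp add: z algebra_simps sum.distrib sum_distrib_left)
  moreover have "geom_span y (m + K) (\<lambda>n. \<Sum>i<m. \<delta> i n * y (n + K + i))"
    using geom_span_offset[of m \<delta> y K] \<delta> by (simp add: add.commute)
  moreover have "geom_span y (m + K) (\<lambda>n. \<Sum>i<m. \<Sum>j<K. \<delta> i n * \<gamma> j (n + i) * y (n + i + j))"
    using \<delta> \<gamma> by (simp add: geom_span_convolution)
  moreover have "geom_span y (m + K) (\<lambda>n. \<Sum>j<K. \<gamma> j (n + m) * y (n + m + j))"
    by (rule geom_span_offset) (simp add: \<gamma> geom_comb_shift)
  ultimately have "geom_span y (m + K) (\<lambda>n. y (n + (m + K)))"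
    by (simp add: geom_span_add geom_span_diff)
  then show ?thesis unfolding geom_rec_def by blast
qed

lemma geom_rec_if_geom_rec_shift:
  assumes "geom_rec (\<lambda>n. y (n + N))"
  shows "geom_rec y"
proof -
  obtain K \<gamma> where "\<forall>j<K. geom_comb (\<gamma> j)" and "\<forall>n. y (n + K + N) = (\<Sum>j<K. \<gamma> j n * y (n + j + N))"
    using assms unfolding geom_rec_def geom_span_def by auto
  with geom_span_offset[of K \<gamma> y N] have "geom_span y (N + K) (\<lambda>n. y (n + (N + K)))"
    by (simp add: algebra_simps)
  then show ?thesis unfolding geom_rec_def by blast
qed

lemma C2_finite_if_geom_rec:
  fixes y :: "nat \<Rightarrow> 'a::field"
  assumes "geom_rec y"
  shows "C2_finite y"
proof -
  obtain N \<gamma> where \<gamma>: "\<forall>t<N. geom_comb (\<gamma> t)" and rec: "\<And>n. y (n + N) = (\<Sum>t<N. \<gamma> t n * y (n + t))"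
    using assms unfolding geom_rec_def geom_span_def by blast
  define c where "c i = (if i = N then (\<lambda>_. 1) else \<gamma> i)" for i
  have "\<forall>i\<le>N. C_finite (c i)"
    using \<gamma> geom_comb_const[of 1] by (auto simp: c_def intro!: C_finite_if_geom_comb)
  moreover have "c N n * y (n + N) = (\<Sum>i<N. c i n * y (n + i))" for n
    by (simp add: c_def rec)
  ultimately show ?thesis unfolding C2_finite_def by (intro exI[of _ N] exI[of _ c]) (simp add: c_def)
qed

section \<open>The twisted operator\<close>

lemma choose2_Suc: "Suc k choose 2 = (k choose 2) + k"
  by (simp add: numeral_2_eq_2)

lemma choose2_add: "(n + j) choose 2 = (n choose 2) + j * n + (j choose 2)"
  by (induction j) (simp_all add: choose2_Suc algebra_simps)

lemma choose2_add_diff: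
  assumes "j \<le> K"
  shows "(K - j) * n + ((K choose 2) - (j choose 2)) + ((n + j) choose 2) = (n + K) choose 2"
proof -
  obtain t where t: "K = j + t" using assms le_Suc_ex by blast
  then have "K choose 2 = (j choose 2) + t * j + (t choose 2)" using choose2_add[of j t] by simp
  then show ?thesis using choose2_add[of n j] choose2_add[of n K] t by (simp add: algebra_simps)
qed

text \<open>The power of \<open>\<Lambda>\<close> at index \<open>j\<close> is \<open>C(n + K, 2) - C(n + j, 2)\<close> with \<open>K = degree p\<close>,
  written so that it is visibly linear in \<open>n\<close>.\<close>

definition twist_op :: "'a::comm_ring_1 poly \<Rightarrow> 'a \<Rightarrow> (nat \<Rightarrow> 'a) \<Rightarrow> nat \<Rightarrow> 'a" where
  "twist_op p \<Lambda> y n =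
     (\<Sum>j\<le>degree p. coeff p j * \<Lambda> ^ ((degree p - j) * n + ((degree p choose 2) - (j choose 2))) * y (n + j))"

lemma twist_op_monic:
  assumes "lead_coeff p = 1"
  shows "twist_op p \<Lambda> y n = y (n + degree p) +
    (\<Sum>j<degree p. coeff p j * \<Lambda> ^ ((degree p - j) * n + ((degree p choose 2) - (j choose 2))) * y (n + j))"
  using assms by (simp add: twist_op_def lessThan_Suc_atMost[symmetric])

lemma geom_comb_twist_coeff: "geom_comb (\<lambda>n. u * \<Lambda> ^ (k * n + l))"
proof -
  have "(\<lambda>n. u * \<Lambda> ^ (k * n + l)) = (\<lambda>n. (u * \<Lambda> ^ l) * (\<Lambda> ^ k) ^ n)"
    by (simp add: fun_eq_iff power_add mult_ac flip: power_mult)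
  then show ?thesis by (simp only: geom_comb_geometric)
qed

lemma twist_op_add: "twist_op p \<Lambda> (\<lambda>n. f n + g n) n = twist_op p \<Lambda> f n + twist_op p \<Lambda> g n"
  by (simp add: twist_op_def algebra_simps sum.distrib)

lemma twist_op_self:
  "twist_op p \<Lambda> (\<lambda>n. \<Lambda> ^ (n choose 2) * R n) n = \<Lambda> ^ ((n + degree p) choose 2) * shift_op p R n"
  unfolding twist_op_def shift_op_def sum_distrib_left
proof (rule sum.cong)
  fix j assume "j \<in> {..degree p}"
  then have power_eq: "\<Lambda> ^ ((degree p - j) * n + ((degree p choose 2) - (j choose 2))) *
      \<Lambda> ^ ((n + j) choose 2) = \<Lambda> ^ ((n + degree p) choose 2)"
    using choose2_add_diff[of j "degree p" n] by (simp flip: power_add)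
  show "coeff p j * \<Lambda> ^ ((degree p - j) * n + ((degree p choose 2) - (j choose 2))) *
      (\<Lambda> ^ ((n + j) choose 2) * R (n + j)) = \<Lambda> ^ ((n + degree p) choose 2) * (coeff p j * R (n + j))"
    by (simp only: power_eq[symmetric] mult_ac)
qed simp

lemma twist_op_other:
  fixes R :: "nat \<Rightarrow> 'a::idom"
  assumes "shift_annihilated R"
  shows "\<exists>R'. shift_annihilated R' \<and>
    (\<forall>n. twist_op p \<Lambda> (\<lambda>n. M ^ (n choose 2) * R n) n = M ^ (n choose 2) * R' n)"
proof -
  define K where "K = degree p"
  define R' where "R' n = (\<Sum>j\<le>K. (coeff p j * \<Lambda> ^ ((K choose 2) - (j choose 2)) * M ^ (j choose 2))
    * ((\<Lambda> ^ (K - j) * M ^ j) ^ n * R (n + j)))" for n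
  have "shift_annihilated R'"
    unfolding R'_def
    by (intro shift_annihilated_sum shift_annihilated_cmult shift_annihilated_mult_geometric
        shift_annihilated_shift assms)
  moreover have "twist_op p \<Lambda> (\<lambda>n. M ^ (n choose 2) * R n) n = M ^ (n choose 2) * R' n" for n
    unfolding twist_op_def R'_def K_def[symmetric] sum_distrib_left
  proof (intro sum.cong refl)
    fix j
    have "\<Lambda> ^ ((K - j) * n + ((K choose 2) - (j choose 2)))
        = (\<Lambda> ^ (K - j)) ^ n * \<Lambda> ^ ((K choose 2) - (j choose 2))"
      by (simp add: power_add power_mult)
    moreover have "M ^ ((n + j) choose 2) = M ^ (n choose 2) * (M ^ j) ^ n * M ^ (j choose 2)"
      by (simp add: choose2_add power_add flip: power_mult)
    ultimately show "coeff p j * \<Lambda> ^ ((K - j) * n + ((K choose 2) - (j choose 2))) *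
        (M ^ ((n + j) choose 2) * R (n + j)) = M ^ (n choose 2) *
        (coeff p j * \<Lambda> ^ ((K choose 2) - (j choose 2)) * M ^ (j choose 2) *
         ((\<Lambda> ^ (K - j) * M ^ j) ^ n * R (n + j)))"
      by (simp add: power_mult_distrib mult_ac)
  qed
  ultimately show ?thesis by blast
qed

lemma twist_op_sum_list:
  fixes L :: "('a::idom \<times> (nat \<Rightarrow> 'a)) list"
  assumes "\<forall>x\<in>set L. shift_annihilated (snd x)"
  shows "\<exists>L'. length L' = length L \<and> (\<forall>x\<in>set L'. shift_annihilated (snd x)) \<and>
    (\<forall>n. twist_op p \<Lambda> (\<lambda>n. \<Sum>x\<leftarrow>L. fst x ^ (n choose 2) * snd x n) n
         = (\<Sum>x\<leftarrow>L'. fst x ^ (n choose 2) * snd x n))"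
  using assms
proof (induction L)
  case Nil
  then show ?case by (simp add: twist_op_def)
next
  case (Cons x L)
  then obtain L' where L': "length L' = length L" "\<forall>x\<in>set L'. shift_annihilated (snd x)"
    "\<forall>n. twist_op p \<Lambda> (\<lambda>n. \<Sum>x\<leftarrow>L. fst x ^ (n choose 2) * snd x n) n
         = (\<Sum>x\<leftarrow>L'. fst x ^ (n choose 2) * snd x n)"
    by auto
  obtain R' where R': "shift_annihilated R'"
    "\<forall>n. twist_op p \<Lambda> (\<lambda>n. fst x ^ (n choose 2) * snd x n) n = fst x ^ (n choose 2) * R' n"
    using twist_op_other[of "snd x" p \<Lambda> "fst x"] Cons.prems by auto
  show ?case
    by (rule exI[of _ "(fst x, R') # L'"]) (use L' R' in \<open>simp add: twist_op_add\<close>)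
qed

lemma geom_rec_sum_twisted:
  fixes L :: "('a::idom \<times> (nat \<Rightarrow> 'a)) list"
  assumes "\<forall>x\<in>set L. shift_annihilated (snd x)"
  shows "geom_rec (\<lambda>n. \<Sum>x\<leftarrow>L. fst x ^ (n choose 2) * snd x n)"
  using assms
proof (induction "length L" arbitrary: L)
  case 0
  then show ?case unfolding geom_rec_def geom_span_def by (intro exI[of _ 0]) simp
next
  case (Suc k)
  then obtain \<Lambda> R L0 where L: "L = (\<Lambda>, R) # L0" and "length L0 = k"
    by (cases L) auto
  with Suc.prems obtain p where p: "lead_coeff p = 1" "\<And>m. shift_op p R m = 0"
    unfolding shift_annihilated_def by auto
  obtain L' where L': "length L' = k" "\<forall>x\<in>set L'. shift_annihilated (snd x)"
    "\<And>n. twist_op p \<Lambda> (\<lambda>n. \<Sum>x\<leftarrow>L0. fst x ^ (n choose 2) * snd x n) n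
         = (\<Sum>x\<leftarrow>L'. fst x ^ (n choose 2) * snd x n)"
    using twist_op_sum_list[of L0 p \<Lambda>] Suc.prems L \<open>length L0 = k\<close> by auto
  define y where "y = (\<lambda>n. \<Sum>x\<leftarrow>L. fst x ^ (n choose 2) * snd x n)"
  have "twist_op p \<Lambda> y n = (\<Sum>x\<leftarrow>L'. fst x ^ (n choose 2) * snd x n)" for n
    using twist_op_add[of p \<Lambda> "\<lambda>n. \<Lambda> ^ (n choose 2) * R n"] L'(3)
    by (simp add: y_def L twist_op_self p(2))
  then show ?case
    using geom_rec_if_monic_image[OF geom_comb_twist_coeff Suc.hyps(1)[OF L'(1)[symmetric] L'(2)]]
      twist_op_monic[OF p(1), of \<Lambda> y]
    by (simp add: y_def)
qed

section \<open>Closed form of C-finite sequences\<close>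

lemma shift_op_diff_power_poly:
  fixes Q :: "'a::idom poly"
  assumes "degree Q \<le> k"
  shows "shift_op ([:- 1, 1:] ^ Suc k) (\<lambda>n. poly Q (of_nat n)) m = 0"
  using assms
proof (induction k arbitrary: Q m)
  case 0
  then obtain c where "Q = [:c:]" by (metis degree_eq_zeroE le_zero_eq)
  then show ?case by (simp add: shift_op_def)
next
  case (Suc k)
  define D where "D = pcompose Q [:1, 1:] - Q"
  have "degree D \<le> k"
  proof -
    have deg: "degree (pcompose Q [:1, 1:]) = degree Q" by (simp add: degree_pcompose)
    moreover have "coeff (pcompose Q [:1, 1:]) (degree Q) = lead_coeff Q"
      using lead_coeff_comp[of "[:1, 1:]" Q] deg by simp
    ultimately have "degree D \<le> degree Q" and "coeff D (degree Q) = 0"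
      unfolding D_def by (auto intro: degree_diff_le)
    show ?thesis
    proof (cases "degree D < degree Q")
      case False
      with \<open>degree D \<le> degree Q\<close> \<open>coeff D (degree Q) = 0\<close> have "D = 0"
        using leading_coeff_0_iff by fastforce
      then show ?thesis by simp
    qed (use Suc.prems in simp)
  qed
  moreover have "shift_op [:- 1, 1:] (\<lambda>n. poly Q (of_nat n)) = (\<lambda>n. poly D (of_nat n))"
    by (auto simp: shift_op_def D_def poly_pcompose fun_eq_iff algebra_simps)
  ultimately show ?case using Suc.IH by (simp only: power_Suc2 shift_op_mult)
qed

lemma shift_annihilated_poly: "shift_annihilated (\<lambda>n. poly (Q :: 'a::idom poly) (of_nat n))"
proof -
  have "lead_coeff ([:- 1, 1:] ^ Suc (degree Q) :: 'a poly) = 1"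
    by (simp only: lead_coeff_power) simp
  with shift_op_diff_power_poly[of Q "degree Q"] show ?thesis
    unfolding shift_annihilated_def by blast
qed

lemma shift_op_monic_unique:
  assumes "lead_coeff p = 1" "\<And>m. shift_op p g m = 0" "\<And>t. t < degree p \<Longrightarrow> g t = 0"
  shows "g m = 0"
proof (induction m rule: less_induct)
  case (less m)
  show ?case
  proof (cases "m < degree p")
    case False
    then obtain m' where m: "m = m' + degree p" by (metis add.commute le_Suc_ex not_less)
    have "0 = g m + (\<Sum>j<degree p. coeff p j * g (m' + j))"
      using assms(2)[of m'] shift_op_monic[OF assms(1)] m by simp
    also have "(\<Sum>j<degree p. coeff p j * g (m' + j)) = 0"
      by (rule sum.neutral) (use less m in auto)
    finally show ?thesis by simp
  qed (use assms(3) in simp)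
qed

text \<open>Sequences killed by \<open>(E - 1)\<^sup>k\<close> are polynomial: they agree with their Lagrange
  interpolant at \<open>0, \<dots>, k - 1\<close>, and the difference vanishes by uniqueness.\<close>

lemma poly_if_diff_power_annihilated:
  fixes f :: "nat \<Rightarrow> 'a::field_char_0"
  assumes "\<And>m. shift_op ([:- 1, 1:] ^ k) f m = 0"
  shows "\<exists>Q. \<forall>m. f m = poly Q (of_nat m)"
proof (cases k)
  case 0
  then show ?thesis using assms by (intro exI[of _ 0]) simp
next
  case (Suc k')
  define B where "B i = (\<Prod>j\<in>{..<k} - {i}. [:- of_nat j :: 'a, 1:])" for i :: nat
  define Q where "Q = (\<Sum>i<k. smult (f i / poly (B i) (of_nat i)) (B i))"
  have poly_B: "poly (B i) x = (\<Prod>j\<in>{..<k} - {i}. x - of_nat j)" for i x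
    by (simp add: B_def poly_prod)
  have "degree (B i) \<le> k'" if "i < k" for i
    using degree_prod_sum_le[of "{..<k} - {i}" "\<lambda>j. [:- of_nat j :: 'a, 1:]"] that Suc
    by (simp add: B_def)
  then have "degree Q \<le> k'"
    unfolding Q_def by (intro degree_sum_le) (auto intro: order.trans[OF degree_smult_le])
  have Q_interpolates: "poly Q (of_nat t) = f t" if "t < k" for t
  proof -
    have "poly Q (of_nat t) = (\<Sum>i\<in>{t}. f i / poly (B i) (of_nat i) * poly (B i) (of_nat t))"
      unfolding Q_def poly_sum poly_smult
      by (rule sum.mono_neutral_right) (use that in \<open>auto simp: poly_B prod_zero_iff\<close>)
    then show ?thesis by (simp add: poly_B prod_zero_iff)
  qed
  define g where "g = (\<lambda>m. f m - poly Q (of_nat m))"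
  have "shift_op ([:- 1, 1:] ^ k) g m = 0" for m
    using shift_op_lincomb[of "[:- 1, 1:] ^ k" 1 f "- 1" "\<lambda>n. poly Q (of_nat n)" m]
      assms[of m] shift_op_diff_power_poly[OF \<open>degree Q \<le> k'\<close>, of m]
    by (simp add: g_def Suc)
  moreover have "lead_coeff ([:- 1, 1:] ^ k :: 'a poly) = 1"
    by (simp only: lead_coeff_power) simp
  ultimately have "g m = 0" for m
    using shift_op_monic_unique[of "[:- 1, 1:] ^ k" g] Q_interpolates
    by (simp add: degree_linear_power g_def)
  then show ?thesis by (intro exI[of _ Q]) (auto simp: g_def)
qed

definition exp_poly_eventually :: "(nat \<Rightarrow> 'a::comm_ring_1) \<Rightarrow> bool" where
  "exp_poly_eventually a \<longleftrightarrow>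
     (\<exists>M L. \<forall>m\<ge>M. a m = (\<Sum>x\<leftarrow>L. fst x ^ m * poly (snd x) (of_nat m)))"

lemma exp_poly_eventually_add:
  assumes "exp_poly_eventually a" "exp_poly_eventually b"
  shows "exp_poly_eventually (\<lambda>m. a m + b m)"
proof -
  obtain M1 L1 M2 L2 where "\<forall>m\<ge>M1. a m = (\<Sum>x\<leftarrow>L1. fst x ^ m * poly (snd x) (of_nat m))"
    "\<forall>m\<ge>M2. b m = (\<Sum>x\<leftarrow>L2. fst x ^ m * poly (snd x) (of_nat m))"
    using assms unfolding exp_poly_eventually_def by blast
  then show ?thesis unfolding exp_poly_eventually_def
    by (intro exI[of _ "max M1 M2"] exI[of _ "L1 @ L2"]) auto
qed

lemma exp_poly_eventually_if_root_power_annihilated: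
  fixes a :: "nat \<Rightarrow> 'a::field_char_0"
  assumes "\<And>m. shift_op ([:- l, 1:] ^ k) a m = 0"
  shows "exp_poly_eventually a"
proof (cases "l = 0")
  case True
  then have "\<forall>m\<ge>k. a m = (\<Sum>x\<leftarrow>[]. fst x ^ m * poly (snd x) (of_nat m))"
    using assms shift_op_X_power[of k a] by (auto dest!: le_Suc_ex simp: add.commute)
  then show ?thesis unfolding exp_poly_eventually_def by blast
next
  case False
  define h where "h m = a m / l ^ m" for m
  have a_eq: "a = (\<lambda>m. l ^ m * h m)" using False by (simp add: h_def)
  have "shift_op ([:- 1, 1:] ^ k) h m = 0" for m
    using assms[of m] shift_op_scale_power[of l k h m] False by (simp flip: a_eq)
  then obtain Q where "\<forall>m. h m = poly Q (of_nat m)"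
    using poly_if_diff_power_annihilated by blast
  then have "\<forall>m\<ge>0. a m = (\<Sum>x\<leftarrow>[(l, Q)]. fst x ^ m * poly (snd x) (of_nat m))"
    by (simp add: a_eq)
  then show ?thesis unfolding exp_poly_eventually_def by blast
qed

lemma shift_op_kernel_split:
  fixes p q :: "'a::field_gcd poly"
  assumes "coprime p q" and "\<And>m. shift_op (p * q) a m = 0"
  obtains a1 a2 where "\<And>m. shift_op p a1 m = 0" "\<And>m. shift_op q a2 m = 0"
    "a = (\<lambda>m. a1 m + a2 m)"
proof -
  define u v where "u = fst (bezout_coefficients p q)" and "v = snd (bezout_coefficients p q)"
  have uv: "v * q + u * p = 1"
    using bezout_coefficients_fst_snd[of p q] assms(1) by (simp add: u_def v_def add.commute)
  have pq: "shift_op (p * q) a = (\<lambda>m. 0)" using assms(2) by auto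
  show thesis
  proof
    show "shift_op p (shift_op (v * q) a) m = 0" for m
    proof -
      have "shift_op p (shift_op (v * q) a) m = shift_op v (shift_op (p * q) a) m"
        by (simp only: shift_op_mult[symmetric] mult_ac)
      with pq show ?thesis by simp
    qed
    show "shift_op q (shift_op (u * p) a) m = 0" for m
    proof -
      have "shift_op q (shift_op (u * p) a) m = shift_op u (shift_op (p * q) a) m"
        by (simp only: shift_op_mult[symmetric] mult_ac)
      with pq show ?thesis by simp
    qed
    show "a = (\<lambda>m. shift_op (v * q) a m + shift_op (u * p) a m)"
    proof
      fix m
      have "a m = shift_op (v * q + u * p) a m" by (simp add: uv)
      then show "a m = shift_op (v * q) a m + shift_op (u * p) a m" by (simp add: shift_op_add)
    qed
  qed
qed

text \<open>Split off the full power of one root of \<open>p\<close> and recurse on the coprime cofactor.\<close>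

lemma exp_poly_eventually_if_annihilated:
  fixes a :: "nat \<Rightarrow> complex"
  assumes "p \<noteq> 0" "\<And>m. shift_op p a m = 0"
  shows "exp_poly_eventually a"
  using assms
proof (induction "degree p" arbitrary: p a rule: less_induct)
  case less
  show ?case
  proof (cases "degree p = 0")
    case True
    then obtain c where "p = [:c:]" by (rule degree_eq_zeroE)
    with less.prems have "\<forall>m\<ge>0. a m = (\<Sum>x\<leftarrow>[]. fst x ^ m * poly (snd x) (of_nat m))"
      by (simp add: shift_op_def)
    then show ?thesis unfolding exp_poly_eventually_def by blast
  next
    case False
    then have "\<not> (\<exists>c l. c \<noteq> 0 \<and> l = 0 \<and> p = pCons c l)" by auto
    then obtain l where "poly p l = 0" using fundamental_theorem_of_algebra_alt by blast
    define k where "k = order l p"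
    obtain q where pq: "p = [:- l, 1:] ^ k * q" and "\<not> [:- l, 1:] dvd q"
      using order_decomp[OF less.prems(1), of l] k_def by blast
    have "k \<noteq> 0" using \<open>poly p l = 0\<close> less.prems(1) order_root k_def by blast
    have "q \<noteq> 0" using pq less.prems(1) by auto
    then have "degree q < degree p"
      using pq \<open>k \<noteq> 0\<close> by (simp add: degree_mult_eq degree_linear_power)
    have "prime_elem [:- l, 1:]" by (rule prime_elem_linear_field_poly) simp
    then have "coprime [:- l, 1:] q"
      using \<open>\<not> [:- l, 1:] dvd q\<close> by (rule prime_elem_imp_coprime)
    then have "coprime ([:- l, 1:] ^ k) q" by simp
    then obtain a1 a2 where "\<And>m. shift_op ([:- l, 1:] ^ k) a1 m = 0" "\<And>m. shift_op q a2 m = 0"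
      and a: "a = (\<lambda>m. a1 m + a2 m)"
      using shift_op_kernel_split less.prems(2)[unfolded pq] by blast
    then have "exp_poly_eventually a1" "exp_poly_eventually a2"
      using exp_poly_eventually_if_root_power_annihilated
        less.hyps[OF \<open>degree q < degree p\<close> \<open>q \<noteq> 0\<close>] by blast+
    then show ?thesis unfolding a by (rule exp_poly_eventually_add)
  qed
qed

section \<open>Quadratic subsequences\<close>

lemma of_nat_choose2: "(of_nat (n choose 2) :: 'a::field_char_0) = of_nat n * (of_nat n - 1) / 2"
  by (induction n) (simp_all add: choose2_Suc field_simps)

lemma geom_rec_quadratic_index:
  fixes a :: "nat \<Rightarrow> 'a::field_char_0"
  assumes "exp_poly_eventually a"
  shows "\<exists>T. \<forall>c d e. e \<ge> T \<longrightarrow> geom_rec (\<lambda>n. a (c * (n choose 2) + d * n + e))"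
proof -
  obtain T L where closed_form: "\<forall>m\<ge>T. a m = (\<Sum>x\<leftarrow>L. fst x ^ m * poly (snd x) (of_nat m))"
    using assms unfolding exp_poly_eventually_def by blast
  have "geom_rec (\<lambda>n. a (c * (n choose 2) + d * n + e))" if "e \<ge> T" for c d e
  proof -
    define G where "G = [:of_nat e, of_nat d - of_nat c / 2, of_nat c / 2 :: 'a:]"
    define R where "R x n = fst x ^ e * ((fst x ^ d) ^ n * poly (pcompose (snd x) G) (of_nat n))"
      for x :: "'a \<times> 'a poly" and n
    have "poly G (of_nat n) = of_nat (c * (n choose 2) + d * n + e)" for n
      by (simp add: G_def of_nat_choose2 field_simps)
    then have "fst x ^ (c * (n choose 2) + d * n + e) * poly (snd x) (of_nat (c * (n choose 2) + d * n + e))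
        = (fst x ^ c) ^ (n choose 2) * R x n" for x n
      by (simp add: R_def poly_pcompose power_add power_mult mult_ac)
    with closed_form \<open>e \<ge> T\<close> have "a (c * (n choose 2) + d * n + e)
        = (\<Sum>x\<leftarrow>map (\<lambda>x. (fst x ^ c, R x)) L. fst x ^ (n choose 2) * snd x n)" for n
      by (simp add: o_def)
    moreover have "shift_annihilated (R x)" for x
      unfolding R_def
      by (intro shift_annihilated_cmult shift_annihilated_mult_geometric shift_annihilated_poly)
    ultimately show ?thesis using geom_rec_sum_twisted[of "map (\<lambda>x. (fst x ^ c, R x)) L"] by simp
  qed
  then show ?thesis by blast
qed

lemma quadratic_index_shift:
  fixes d e :: int and c T :: nat
  assumes "c > 0"
  obtains N d' e' where "e' \<ge> T"
    "\<And>n. int c * int ((n + N) choose 2) + d * int (n + N) + e = int (c * (n choose 2) + d' * n + e')"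
proof -
  define K where "K = nat \<bar>d\<bar> + nat \<bar>e\<bar> + T"
  define N where "N = 2 * K + 2"
  define d' where "d' = int c * int N + d"
  define e' where "e' = int c * int (N choose 2) + d * int N + e"
  have "N * (N - 1) = 2 * ((K + 1) * (2 * K + 1))" by (simp add: N_def algebra_simps)
  then have "int (N choose 2) = 2 * int K * int K + 3 * int K + 1"
    by (simp add: choose_two algebra_simps)
  moreover have "int K * int N = 2 * int K * int K + 2 * int K" "int K \<le> int N"
    by (simp_all add: N_def algebra_simps)
  moreover have "int N \<le> int c * int N" "int (N choose 2) \<le> int c * int (N choose 2)"
    using assms by (simp_all add: mult_le_cancel_right1)
  moreover have "- (int K * int N) \<le> d * int N"
  proof -
    have "- d * int N \<le> \<bar>d\<bar> * int N" by (rule mult_right_mono) simp_all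
    also have "\<dots> \<le> int K * int N" by (rule mult_right_mono) (simp_all add: K_def)
    finally show ?thesis by simp
  qed
  moreover have "\<bar>d\<bar> + \<bar>e\<bar> + int T \<le> int K" by (simp add: K_def)
  ultimately have "d' \<ge> 0" "e' \<ge> int T"
    unfolding d'_def e'_def by arith+
  moreover have "int c * int ((n + N) choose 2) + d * int (n + N) + e
      = int c * int (n choose 2) + d' * int n + e'" for n
    by (simp add: choose2_add d'_def e'_def algebra_simps)
  ultimately show thesis
    by (intro that[of "nat e'" N "nat d'"]) auto
qed

theorem theorem1:
  fixes a :: "nat \<Rightarrow> complex" and c :: nat and d e :: int
  assumes "C_finite a" and "c > 0"
  shows "\<exists>b :: nat \<Rightarrow> complex. C2_finite b \<and>
           (\<forall>n. int c * int (n choose 2) + d * int n + e \<ge> 0 \<longrightarrow>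
                b n = a (nat (int c * int (n choose 2) + d * int n + e)))"
proof -
  obtain s where "shift_annihilated (\<lambda>m. a (m + s))"
    using shift_annihilated_if_C_finite[OF assms(1)] by blast
  then obtain p where "lead_coeff p = 1" "\<And>m. shift_op p (\<lambda>m. a (m + s)) m = 0"
    unfolding shift_annihilated_def by blast
  then have "exp_poly_eventually (\<lambda>m. a (m + s))"
    by (intro exp_poly_eventually_if_annihilated[of p]) auto
  then obtain T where T: "\<forall>c d e. e \<ge> T \<longrightarrow> geom_rec (\<lambda>n. a (c * (n choose 2) + d * n + e + s))"
    by (blast dest: geom_rec_quadratic_index)
  obtain N d' e' where "e' \<ge> T + s" and index: "\<And>n. int c * int ((n + N) choose 2) + d * int (n + N) + e
      = int (c * (n choose 2) + d' * n + e')"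
    by (rule quadratic_index_shift[OF assms(2), where T = "T + s" and d = d and e = e]) (rule that)
  define b where "b n = a (nat (int c * int (n choose 2) + d * int n + e))" for n
  have b_shift: "b (n + N) = a (c * (n choose 2) + d' * n + (e' - s) + s)" for n
    using \<open>e' \<ge> T + s\<close> unfolding b_def index nat_int by simp
  have "T \<le> e' - s" using \<open>e' \<ge> T + s\<close> by simp
  then have "geom_rec (\<lambda>n. b (n + N))" unfolding b_shift by (rule T[rule_format])
  then have "C2_finite b" by (rule C2_finite_if_geom_rec[OF geom_rec_if_geom_rec_shift])
  then show ?thesis by (intro exI[of _ b]) (simp add: b_def)
qed

end
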